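(* Let $0\to P\to B\to R\to0$ be a short exact sequence of finite-length $\Bbbk[N]$-modules, and let $\lambda,\mu,\nu$ be the Jordan types of $N$ acting on $P$, $B$, $R$ respectively. (1) $\mu\ge\lambda+\nu$ in dominance order, where $\lambda+\nu$ is the partition whose multiset of parts is the union of the parts of $\lambda$ and of $\nu$. (2) If moreover $\lambda$ and $\mu$ are $t$-interlaced for some $t\in\mathbb Z$, then $\nu$ is not strictly greater than $\operatorname{diff}(\mu,\lambda)$ in dominance order.
   Context: A finite-length $\Bbbk[N]$-module is a finite-dimensional vector space with a nilpotent operator $N$; its Jordan type is the partition of block sizes. Dominance order: $\gamma\le\kappa$ if $\gamma_1+\dots+\gamma_k\le\kappa_1+\dots+\kappa_k$ for all $k$ (parts padded with zeros). For $t\ge0$, $\lambda,\mu$ are $t$-interlaced if $\mu_1\ge\dots\ge\mu_{t+1}\ge\lambda_1\ge\mu_{t+2}\ge\mu_{t+3}\ge\lambda_2\ge\mu_{t+4}\ge\mu_{t+5}\ge\lambda_3\ge\cdots$ (all partitions padded with infinitely many zeros), and then $\operatorname{diff}(\mu,\lambda)=(\mu_1,\dots,\mu_t,\mu_{t+1}+\mu_{t+2}-\lambda_1,\mu_{t+3}+\mu_{t+4}-\lambda_2,\dots)$. For $t\le0$, they are $t$-interlaced if $\lambda_i=\mu_i$ for $i\le-t$ and $\mu_{-t+1}\ge\lambda_{-t+1}\ge\mu_{-t+2}\ge\mu_{-t+3}\ge\lambda_{-t+2}\ge\mu_{-t+4}\ge\mu_{-t+5}\ge\lambda_{-t+3}\ge\cdots$,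 and then $\operatorname{diff}(\mu,\lambda)=(\mu_{-t+1}+\mu_{-t+2}-\lambda_{-t+1},\mu_{-t+3}+\mu_{-t+4}-\lambda_{-t+2},\dots)$. *)

theory Defs
  imports Complex_Main
begin

definition is_partition :: "nat list \<Rightarrow> bool" where
  "is_partition xs \<longleftrightarrow> sorted_wrt (\<ge>) xs \<and> 0 \<notin> set xs"

definition part :: "nat list \<Rightarrow> nat \<Rightarrow> nat" where
  "part xs i = (if i < length xs then xs ! i else 0)"

text \<open>Dominance order on zero-padded sequences (index 0 is the first part).\<close>
definition dominated :: "(nat \<Rightarrow> nat) \<Rightarrow> (nat \<Rightarrow> nat) \<Rightarrow> bool" where
  "dominated g k \<longleftrightarrow> (\<forall>n. (\<Sum>i<n. g i) \<le> (\<Sum>i<n. k i))"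

definition strictly_dominated :: "(nat \<Rightarrow> nat) \<Rightarrow> (nat \<Rightarrow> nat) \<Rightarrow> bool" where
  "strictly_dominated g k \<longleftrightarrow> dominated g k \<and> g \<noteq> k"

definition part_union :: "nat list \<Rightarrow> nat list \<Rightarrow> nat list" where
  "part_union l n = rev (sort (l @ n))"

text \<open>t-interlacing (0-indexed translation of the paper's 1-indexed definition).\<close>
definition interlaced :: "int \<Rightarrow> nat list \<Rightarrow> nat list \<Rightarrow> bool" where
  "interlaced t lam mu \<longleftrightarrow>
     (if t \<ge> 0 then
        (let s = nat t in \<forall>i. part mu (s + 2*i) \<ge> part lam i \<and> part lam i \<ge> part mu (s + 2*i + 1))
      else
        (let s = nat (- t) in
           (\<forall>i<s. part lam i = part mu i) \<and>
           (\<forall>i. part mu (s + 2*i) \<ge> part lam (s + i) \<and> part lam (s + i) \<ge> part mu (s + 2*i + 1))))"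

definition diff :: "int \<Rightarrow> nat list \<Rightarrow> nat list \<Rightarrow> nat \<Rightarrow> nat" where
  "diff t mu lam j =
     (if t \<ge> 0 then
        (let s = nat t in if j < s then part mu j
             else part mu (s + 2*(j-s)) + part mu (s + 2*(j-s) + 1) - part lam (j-s))
      else
        (let s = nat (- t) in part mu (s + 2*j) + part mu (s + 2*j + 1) - part lam (s + j)))"

text \<open>A finite-length k[N]-module: a finite-dimensional k-vector space (the whole
  type 'v with scalar multiplication s) with a nilpotent linear operator N.\<close>
definition fl_module :: "('k::field \<Rightarrow> 'v::ab_group_add \<Rightarrow> 'v) \<Rightarrow> ('v \<Rightarrow> 'v) \<Rightarrow> bool" where
  "fl_module s N \<longleftrightarrow> vector_space s \<and> (\<exists>B. finite B \<and> Modules.module.span s B = UNIV)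
     \<and> Vector_Spaces.linear s s N \<and> (\<exists>n. (N ^^ n) = (\<lambda>_. 0))"

definition kN_hom :: "('k::field \<Rightarrow> 'v::ab_group_add \<Rightarrow> 'v) \<Rightarrow> ('v \<Rightarrow> 'v)
    \<Rightarrow> ('k \<Rightarrow> 'w::ab_group_add \<Rightarrow> 'w) \<Rightarrow> ('w \<Rightarrow> 'w) \<Rightarrow> ('v \<Rightarrow> 'w) \<Rightarrow> bool" where
  "kN_hom s1 N1 s2 N2 f \<longleftrightarrow> Vector_Spaces.linear s1 s2 f \<and> (\<forall>v. f (N1 v) = N2 (f v))"

definition short_exact where
  "short_exact sP NP sB NB sR NR f g \<longleftrightarrow>
     kN_hom sP NP sB NB f \<and> kN_hom sB NB sR NR g \<and>
     inj f \<and> range f = {b. g b = 0} \<and> surj g"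

text \<open>Jordan type: lam is the partition of Jordan block sizes, i.e. there are
  vectors v_j (one per block) such that the vectors N^k v_j (k < lam_j) are pairwise
  distinct and form a basis, and N^(lam_j) v_j = 0.\<close>
definition jordan_type :: "('k::field \<Rightarrow> 'v::ab_group_add \<Rightarrow> 'v) \<Rightarrow> ('v \<Rightarrow> 'v) \<Rightarrow> nat list \<Rightarrow> bool" where
  "jordan_type s N lam \<longleftrightarrow> is_partition lam \<and>
     (\<exists>vs :: 'v list. length vs = length lam \<and>
        (\<forall>j<length lam. (N ^^ (lam ! j)) (vs ! j) = 0) \<and>
        inj_on (\<lambda>(j,k). (N ^^ k) (vs ! j)) {(j,k). j < length lam \<and> k < lam ! j} \<and>
        \<not> Modules.module.dependent s ((\<lambda>(j,k). (N ^^ k) (vs ! j)) ` {(j,k). j < length lam \<and> k < lam ! j}) \<and>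
        Modules.module.span s ((\<lambda>(j,k). (N ^^ k) (vs ! j)) ` {(j,k). j < length lam \<and> k < lam ! j}) = UNIV)"

end

theory Submission
  imports Defs "HOL-Library.Multiset"
begin

(* Both parts follow from the inequality
     nu_1 + ... + nu_n + lambda_1 + ... + lambda_a <= mu_1 + ... + mu_(n+a)   for all n, a.
   Lift the first n Jordan chains of R to B and add the image of the Jordan basis of P: this
   is an independent set of size |lambda| + nu_1 + ... + nu_n. Put k = mu_(n+a+1). The set lies
   in the span of the chains of P after the a-th one, of the first k iterates of the n + a
   heads of the other chains, and of the image of N^k, which is spanned by
   sum_j max(mu_j - k, 0) Jordan basis vectors of B. Since
   (n + a) k + sum_j max(mu_j - k, 0) = mu_1 + ... + mu_(n+a), counting gives the inequality.

   For (1), the first N parts of lambda + nu are the first a parts of lambda and the first b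
   parts of nu for some a + b = N. For (2), the inequality with a = max(n - t, 0) says that nu
   is dominated by diff(mu, lambda), and dominance is antisymmetric. *)

section \<open>Jordan chains\<close>

definition jordan_vec :: "('v \<Rightarrow> 'v) \<Rightarrow> 'v list \<Rightarrow> nat \<times> nat \<Rightarrow> 'v" where
  "jordan_vec N vs = (\<lambda>(j, k). (N ^^ k) (vs ! j))"

definition jordan_idx :: "nat list \<Rightarrow> (nat \<times> nat) set" where
  "jordan_idx lam = {(j, k). j < length lam \<and> k < lam ! j}"

(* Qualified: HOL-Library.Multiset has a part_def of its own. *)
lemma part_nth [simp]: "i < length xs \<Longrightarrow> part xs i = xs ! i"
  by (simp add: Defs.part_def)

lemma part_eq_0 [simp]: "length xs \<le> i \<Longrightarrow> part xs i = 0"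
  by (simp add: Defs.part_def)

lemma part_Cons_Suc [simp]: "part (x # xs) (Suc i) = part xs i"
  by (simp add: Defs.part_def)

lemma jordan_vec_apply [simp]: "jordan_vec N vs (j, k) = (N ^^ k) (vs ! j)"
  by (simp add: jordan_vec_def)

lemma jordan_type_iff:
  "jordan_type s N lam \<longleftrightarrow> is_partition lam \<and>
     (\<exists>vs. length vs = length lam \<and> (\<forall>j<length lam. (N ^^ (lam ! j)) (vs ! j) = 0) \<and>
        inj_on (jordan_vec N vs) (jordan_idx lam) \<and>
        \<not> module.dependent s (jordan_vec N vs ` jordan_idx lam) \<and>
        module.span s (jordan_vec N vs ` jordan_idx lam) = UNIV)"
  by (simp add: jordan_type_def jordan_vec_def jordan_idx_def)

lemma finite_jordan_idx [simp]: "finite (jordan_idx lam)"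
proof -
  have "jordan_idx lam = Sigma {..<length lam} (\<lambda>j. {..<lam ! j})"
    by (auto simp: jordan_idx_def)
  then show ?thesis by simp
qed

lemma finite_jordan_idx_restrict [simp]: "finite {(j, k) \<in> jordan_idx lam. P j k}"
  by (rule finite_subset[OF _ finite_jordan_idx]) auto

lemma card_jordan_idx_prefix: "card {(j, k) \<in> jordan_idx lam. j < n} = (\<Sum>j<n. part lam j)"
proof -
  have "{(j, k) \<in> jordan_idx lam. j < n} = Sigma {j. j < n \<and> j < length lam} (\<lambda>j. {..<lam ! j})"
    by (auto simp: jordan_idx_def)
  then have "card {(j, k) \<in> jordan_idx lam. j < n} = (\<Sum>j | j < n \<and> j < length lam. lam ! j)"
    by simp
  also have "\<dots> = (\<Sum>j<n. part lam j)"
    by (intro sum.mono_neutral_cong_left) (auto simp: Defs.part_def split: if_splits)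
  finally show ?thesis .
qed

lemma card_jordan_idx_split:
  "card (jordan_idx lam) = (\<Sum>i<a. part lam i) + card {(i, k) \<in> jordan_idx lam. a \<le> i}"
proof -
  have "jordan_idx lam = {(i, k) \<in> jordan_idx lam. i < a} \<union> {(i, k) \<in> jordan_idx lam. a \<le> i}"
    by auto
  moreover have "{(i, k) \<in> jordan_idx lam. i < a} \<inter> {(i, k) \<in> jordan_idx lam. a \<le> i} = {}"
    by auto
  ultimately have "card (jordan_idx lam)
      = card {(i, k) \<in> jordan_idx lam. i < a} + card {(i, k) \<in> jordan_idx lam. a \<le> i}"
    by (metis (no_types, lifting) card_Un_disjoint finite_Un finite_jordan_idx)
  then show ?thesis by (simp add: card_jordan_idx_prefix)
qed

lemma card_jordan_idx_from:
  "card {(j, k) \<in> jordan_idx mu. m \<le> k} = (\<Sum>j<length mu. mu ! j - m)"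
proof -
  have "{(j, k) \<in> jordan_idx mu. m \<le> k} = Sigma {..<length mu} (\<lambda>j. {m..<mu ! j})"
    by (auto simp: jordan_idx_def)
  then show ?thesis by simp
qed

lemma sum_prefix_part_eq:
  assumes "sorted_wrt (\<ge>) xs"
  shows "(\<Sum>j<p. part xs j) = p * part xs p + (\<Sum>j<length xs. xs ! j - part xs p)"
proof (cases "p < length xs")
  case False
  then have "(\<Sum>j<p. part xs j) = (\<Sum>j<length xs. part xs j)"
    by (intro sum.mono_neutral_right) auto
  also have "\<dots> = (\<Sum>j<length xs. xs ! j)"
    by simp
  finally show ?thesis using False by simp
next
  case True
  define c where "c = xs ! p"
  have ge: "c \<le> xs ! j" if "j < p" for j
    using assms True that unfolding c_def by (simp add: sorted_wrt_iff_nth_less)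
  have le: "xs ! j \<le> c" if "p \<le> j" "j < length xs" for j
    using assms that unfolding c_def by (cases "p = j") (auto simp: sorted_wrt_iff_nth_less)
  have "(\<Sum>j<length xs. xs ! j - c) = (\<Sum>j<p. xs ! j - c)"
    using True le by (intro sum.mono_neutral_right) auto
  moreover have "(\<Sum>j<p. part xs j) = (\<Sum>j<p. (xs ! j - c) + c)"
    using True ge by (intro sum.cong) auto
  ultimately show ?thesis using True by (simp add: sum.distrib c_def)
qed

section \<open>Independent sets in a module with a Jordan basis\<close>

lemma linear_funpow:
  assumes "vector_space s" "Vector_Spaces.linear s s N"
  shows "Vector_Spaces.linear s s (N ^^ k)"
proof (induction k)
  case 0
  show ?case using vector_space.linear_ident[OF assms(1)] by (simp add: id_def)
next
  case (Suc k)
  show ?case using Vector_Spaces.linear_compose[OF Suc assms(2)] by (simp add: comp_def)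
qed

lemma kN_hom_funpow: "kN_hom s1 N1 s2 N2 h \<Longrightarrow> h ((N1 ^^ k) v) = (N2 ^^ k) (h v)"
  by (induction k) (simp_all add: kN_hom_def)

lemma funpow_in_span_jordan_tail:
  assumes "vector_space s" "Vector_Spaces.linear s s N"
    and nil: "\<forall>j<length mu. (N ^^ (mu ! j)) (vs ! j) = 0"
    and spans: "module.span s (jordan_vec N vs ` jordan_idx mu) = UNIV"
  shows "(N ^^ k) y \<in> module.span s (jordan_vec N vs ` {(j, m) \<in> jordan_idx mu. k \<le> m})"
proof -
  interpret vector_space s by fact
  interpret Nk: Vector_Spaces.linear s s "N ^^ k" using linear_funpow[OF assms(1,2)] .
  let ?T = "jordan_vec N vs ` {(j, m) \<in> jordan_idx mu. k \<le> m}"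
  have "(N ^^ k) (jordan_vec N vs (j, m)) \<in> span ?T" if "(j, m) \<in> jordan_idx mu" for j m
  proof (cases "k + m < mu ! j")
    case True
    then have "(N ^^ k) (jordan_vec N vs (j, m)) = jordan_vec N vs (j, k + m)"
      by (simp add: funpow_add)
    moreover have "(j, k + m) \<in> {(j, m) \<in> jordan_idx mu. k \<le> m}"
      using True that by (simp add: jordan_idx_def)
    ultimately have "(N ^^ k) (jordan_vec N vs (j, m)) \<in> ?T"
      by (simp only:) (rule imageI)
    then show ?thesis by (rule span_base)
  next
    case False
    have "(N ^^ k) (jordan_vec N vs (j, m)) = (N ^^ (k + m - mu ! j)) ((N ^^ (mu ! j)) (vs ! j))"
      using False by (simp flip: funpow_add comp_apply[of "N ^^ _" "N ^^ _"])
    also have "\<dots> = (N ^^ (k + m - mu ! j)) 0"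
      using nil that by (simp add: jordan_idx_def)
    also have "\<dots> = 0"
      by (rule module_hom.zero) (use linear_funpow[OF assms(1,2)] in \<open>simp add: linear_iff_module_hom\<close>)
    finally show ?thesis by (simp add: span_zero)
  qed
  then have "(N ^^ k) ` jordan_vec N vs ` jordan_idx mu \<subseteq> span ?T"
    by auto
  then have "span ((N ^^ k) ` jordan_vec N vs ` jordan_idx mu) \<subseteq> span ?T"
    by (simp add: span_minimal)
  moreover have "(N ^^ k) y \<in> span ((N ^^ k) ` jordan_vec N vs ` jordan_idx mu)"
    using spans by (simp add: Nk.span_image)
  ultimately show ?thesis by blast
qed

lemma independent_Un_lift:
  assumes "vector_space sB" "vector_space sR" "Vector_Spaces.linear sB sR g"
    and "\<not> module.dependent sB A" "A \<subseteq> {b. g b = 0}"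
    and "finite X" "inj_on g X" "\<not> module.dependent sR (g ` X)"
  shows "\<not> module.dependent sB (A \<union> X)" and "A \<inter> X = {}"
proof -
  interpret B: vector_space sB by fact
  interpret R: vector_space sR by fact
  interpret G: Vector_Spaces.linear sB sR g by fact
  show "A \<inter> X = {}"
  proof (rule ccontr)
    assume "A \<inter> X \<noteq> {}"
    then have "0 \<in> g ` X"
      using assms(5) by force
    then show False
      using assms(8) R.dependent_zero by blast
  qed
  show "\<not> B.dependent (A \<union> X)"
    using \<open>finite X\<close> \<open>inj_on g X\<close> \<open>\<not> R.dependent (g ` X)\<close>
  proof (induction X rule: finite_induct)
    case empty
    then show ?case using assms(4) by simp
  next
    case (insert x X)
    have "\<not> R.dependent (g ` X)"
      using insert.prems(2) R.independent_mono[OF _ subset_insertI] by auto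
    then have IH: "\<not> B.dependent (A \<union> X)"
      using insert.IH insert.prems(1) by (simp add: inj_on_insert)
    have "g x \<notin> R.span (g ` X)"
      using insert.prems insert.hyps(2) by (simp add: R.independent_insert inj_on_insert)
    moreover have "g ` B.span (A \<union> X) \<subseteq> R.span (g ` X)"
    proof -
      have "g ` (A \<union> X) \<subseteq> insert 0 (g ` X)"
        using assms(5) by auto
      then show ?thesis
        by (metis G.span_image R.span_insert_0 R.span_mono)
    qed
    ultimately have "x \<notin> B.span (A \<union> X)"
      by blast
    then show ?case
      using IH by (auto simp: B.independent_insert insert_absorb)
  qed
qed

definition iterates :: "('v \<Rightarrow> 'v) \<Rightarrow> 'v set \<Rightarrow> 'v set" where
  "iterates N H = {(N ^^ m) x | x m. x \<in> H}"

lemma iterates_subset_span_jordan: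
  assumes "vector_space s" "Vector_Spaces.linear s s N"
    and nil: "\<forall>j<length mu. (N ^^ (mu ! j)) (vs ! j) = 0"
    and spans: "module.span s (jordan_vec N vs ` jordan_idx mu) = UNIV"
  shows "iterates N H \<subseteq> module.span s
    ((\<lambda>(x, m). (N ^^ m) x) ` (H \<times> {..<k}) \<union> jordan_vec N vs ` {(j, m) \<in> jordan_idx mu. k \<le> m})"
    (is "_ \<subseteq> module.span s (?Z \<union> ?T)")
proof
  interpret vector_space s by fact
  fix y assume "y \<in> iterates N H"
  then obtain x m where "x \<in> H" and y: "y = (N ^^ m) x"
    by (auto simp: iterates_def)
  show "y \<in> span (?Z \<union> ?T)"
  proof (cases "m < k")
    case True
    then have "y \<in> ?Z"
      using \<open>x \<in> H\<close> y by force
    then show ?thesis by (simp add: span_base)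
  next
    case False
    then have "y = (N ^^ k) ((N ^^ (m - k)) x)"
      using y by (simp flip: funpow_add comp_apply[of "N ^^ _" "N ^^ _"])
    also have "\<dots> \<in> span ?T"
      by (rule funpow_in_span_jordan_tail[OF assms])
    finally show ?thesis by (meson span_mono sup_ge2 subsetD)
  qed
qed

lemma card_independent_in_iterates_le:
  assumes "vector_space s" "Vector_Spaces.linear s s N" "jordan_type s N mu"
    and "finite W" "finite H" "card H \<le> q"
    and indep: "\<not> module.dependent s S" and S: "S \<subseteq> W \<union> iterates N H"
  shows "card S \<le> card W + (\<Sum>j<q. part mu j)"
proof -
  interpret vector_space s by fact
  obtain vs where nil: "\<forall>j<length mu. (N ^^ (mu ! j)) (vs ! j) = 0"
    and spans: "span (jordan_vec N vs ` jordan_idx mu) = UNIV"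
    using \<open>jordan_type s N mu\<close> unfolding jordan_type_iff by blast
  have sorted: "sorted_wrt (\<ge>) mu"
    using \<open>jordan_type s N mu\<close> by (simp add: jordan_type_iff is_partition_def)
  define k where "k = part mu q"
  define Z where "Z = (\<lambda>(x, m). (N ^^ m) x) ` (H \<times> {..<k})"
  define T where "T = jordan_vec N vs ` {(j, m) \<in> jordan_idx mu. k \<le> m}"
  have "iterates N H \<subseteq> span (Z \<union> T)"
    unfolding Z_def T_def by (rule iterates_subset_span_jordan[OF assms(1,2) nil spans])
  then have "S \<subseteq> W \<union> span (Z \<union> T)"
    using S by auto
  also have "\<dots> \<subseteq> span (W \<union> (Z \<union> T))"
    by (intro Un_least order_trans[OF span_superset span_mono] span_mono) auto
  finally have "S \<subseteq> span (W \<union> (Z \<union> T))" .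
  moreover have "finite (W \<union> (Z \<union> T))"
    using \<open>finite W\<close> \<open>finite H\<close> by (simp add: Z_def T_def)
  ultimately have "card S \<le> card (W \<union> (Z \<union> T))"
    using independent_span_bound[OF _ indep, of "W \<union> (Z \<union> T)"] by simp
  moreover have "card (W \<union> (Z \<union> T)) \<le> card W + (card Z + card T)"
    using card_Un_le[of W "Z \<union> T"] card_Un_le[of Z T] by linarith
  moreover have "card Z \<le> q * k"
  proof -
    have "card Z \<le> card H * k"
      unfolding Z_def using card_image_le[of "H \<times> {..<k}"] \<open>finite H\<close>
      by (simp add: card_cartesian_product)
    then show ?thesis
      using \<open>card H \<le> q\<close> by (meson mult_le_mono1 order_trans)
  qed
  moreover have "card T \<le> (\<Sum>j<length mu. mu ! j - k)"
    unfolding T_def card_jordan_idx_from[symmetric] by (rule card_image_le) simp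
  moreover have "q * k + (\<Sum>j<length mu. mu ! j - k) = (\<Sum>j<q. part mu j)"
    unfolding k_def by (rule sum_prefix_part_eq[OF sorted, symmetric])
  ultimately show ?thesis by linarith
qed

section \<open>The prefix-sum inequality for a short exact sequence\<close>

lemma jordan_vec_lift:
  assumes "kN_hom sB NB sR NR g" "surj g" "j < length ws"
  shows "g (jordan_vec NB (map (inv g) ws) (j, m)) = jordan_vec NR ws (j, m)"
  using assms by (simp add: kN_hom_funpow surj_f_inv_f)

lemma independent_lifted_chains:
  assumes vs: "vector_space sP" "vector_space sB" "vector_space sR"
    and "short_exact sP NP sB NB sR NR f g"
    and inj_vP: "inj_on (jordan_vec NP vP) (jordan_idx lam)"
    and indep_vP: "\<not> module.dependent sP (jordan_vec NP vP ` jordan_idx lam)"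
    and len_vR: "length vR = length nu"
    and inj_vR: "inj_on (jordan_vec NR vR) (jordan_idx nu)"
    and indep_vR: "\<not> module.dependent sR (jordan_vec NR vR ` jordan_idx nu)"
    and "K \<subseteq> jordan_idx nu"
  defines "C \<equiv> f ` jordan_vec NP vP ` jordan_idx lam \<union> jordan_vec NB (map (inv g) vR) ` K"
  shows "\<not> module.dependent sB C" and "card C = card (jordan_idx lam) + card K"
proof -
  have homf: "kN_hom sP NP sB NB f" and homg: "kN_hom sB NB sR NR g"
    and "inj f" and ker_g: "range f = {b. g b = 0}" and "surj g"
    using \<open>short_exact sP NP sB NB sR NR f g\<close> by (simp_all add: short_exact_def)
  interpret R: vector_space sR by fact
  interpret F: Vector_Spaces.linear sP sB f
    using homf by (simp add: kN_hom_def)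
  have lin_g: "Vector_Spaces.linear sB sR g"
    using homg by (simp add: kN_hom_def)
  define lift where "lift = jordan_vec NB (map (inv g) vR)"
  define I where "I = f ` jordan_vec NP vP ` jordan_idx lam"
  have g_lift: "g (lift jm) = jordan_vec NR vR jm" if "jm \<in> K" for jm
    using that \<open>K \<subseteq> jordan_idx nu\<close> jordan_vec_lift[OF homg \<open>surj g\<close>] len_vR
    by (auto simp: lift_def jordan_idx_def)
  have "inj_on (jordan_vec NR vR) K"
    using inj_vR \<open>K \<subseteq> jordan_idx nu\<close> by (rule inj_on_subset)
  then have inj_g_lift: "inj_on (g \<circ> lift) K"
    using inj_on_cong[of K "g \<circ> lift" "jordan_vec NR vR"] g_lift by simp
  have "finite K"
    using \<open>K \<subseteq> jordan_idx nu\<close> finite_jordan_idx by (rule finite_subset)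
  have indep_I: "\<not> module.dependent sB I"
    unfolding I_def using indep_vP \<open>inj f\<close>
    by (simp add: F.independent_injective_image inj_on_def inj_def)
  have "g ` lift ` K = jordan_vec NR vR ` K"
    using g_lift by (force simp: image_comp)
  then have indep_g_lift: "\<not> R.dependent (g ` lift ` K)"
    using \<open>K \<subseteq> jordan_idx nu\<close> by (simp add: R.independent_mono[OF indep_vR] image_mono)
  have I_ker: "I \<subseteq> {b. g b = 0}"
    using ker_g by (auto simp: I_def)
  note lift_props = independent_Un_lift[OF vs(2,3) lin_g indep_I I_ker
      finite_imageI[OF \<open>finite K\<close>] inj_on_imageI[OF inj_g_lift] indep_g_lift]
  show "\<not> module.dependent sB C"
    using lift_props(1) by (simp add: C_def I_def lift_def)
  have "card I = card (jordan_idx lam)"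
    unfolding I_def image_comp using inj_vP \<open>inj f\<close>
    by (intro card_image comp_inj_on) (auto simp: inj_on_def inj_def)
  moreover have "card (lift ` K) = card K"
    using inj_g_lift by (intro card_image) (rule inj_on_imageI2)
  ultimately show "card C = card (jordan_idx lam) + card K"
    using lift_props(2) \<open>finite K\<close> by (simp add: C_def I_def lift_def card_Un_disjoint)
qed

lemma jordan_chains_prefix_subset_iterates:
  assumes "(!) vs ` {..<n} \<subseteq> H"
  shows "jordan_vec N vs ` {(j, m) \<in> jordan_idx lam. j < n} \<subseteq> iterates N H"
proof
  fix y assume "y \<in> jordan_vec N vs ` {(j, m) \<in> jordan_idx lam. j < n}"
  then obtain j m where "j < n" "y = (N ^^ m) (vs ! j)"
    by auto
  then show "y \<in> iterates N H"
    using assms by (auto simp: iterates_def)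
qed

lemma kN_hom_image_jordan_chains_subset:
  assumes "kN_hom sP NP sB NB f" and heads: "(\<lambda>i. f (vP ! i)) ` {..<a} \<subseteq> H"
  shows "f ` jordan_vec NP vP ` jordan_idx lam
    \<subseteq> f ` jordan_vec NP vP ` {(i, m) \<in> jordan_idx lam. a \<le> i} \<union> iterates NB H"
proof
  fix y assume "y \<in> f ` jordan_vec NP vP ` jordan_idx lam"
  then obtain i m where im: "(i, m) \<in> jordan_idx lam" and y: "y = f (jordan_vec NP vP (i, m))"
    by auto
  show "y \<in> f ` jordan_vec NP vP ` {(i, m) \<in> jordan_idx lam. a \<le> i} \<union> iterates NB H"
  proof (cases "a \<le> i")
    case True
    then show ?thesis
      using im y by (intro UnI1 image_eqI[of y f] image_eqI[where x = "(i, m)"]) auto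
  next
    case False
    then have "f (vP ! i) \<in> H"
      using heads by auto
    moreover have "y = (NB ^^ m) (f (vP ! i))"
      using y assms by (simp add: kN_hom_funpow)
    ultimately show ?thesis by (auto simp: iterates_def)
  qed
qed

lemma short_exact_prefix_sum_le:
  assumes "fl_module sP NP" "fl_module sB NB" "fl_module sR NR"
    and ses: "short_exact sP NP sB NB sR NR f g"
    and "jordan_type sP NP lam" "jordan_type sB NB mu" "jordan_type sR NR nu"
  shows "(\<Sum>j<n. part nu j) + (\<Sum>i<a. part lam i) \<le> (\<Sum>j<n + a. part mu j)"
proof -
  have vs: "vector_space sP" "vector_space sB" "vector_space sR"
    and lin_NB: "Vector_Spaces.linear sB sB NB"
    using assms(1-3) by (simp_all add: fl_module_def)
  have homf: "kN_hom sP NP sB NB f"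
    using ses by (simp add: short_exact_def)
  obtain vP where inj_vP: "inj_on (jordan_vec NP vP) (jordan_idx lam)"
    and indep_vP: "\<not> module.dependent sP (jordan_vec NP vP ` jordan_idx lam)"
    using assms(5) unfolding jordan_type_iff by blast
  obtain vR where len_vR: "length vR = length nu"
    and inj_vR: "inj_on (jordan_vec NR vR) (jordan_idx nu)"
    and indep_vR: "\<not> module.dependent sR (jordan_vec NR vR ` jordan_idx nu)"
    using assms(7) unfolding jordan_type_iff by blast
  define K where "K = {(j, m) \<in> jordan_idx nu. j < n}"
  define C where "C = f ` jordan_vec NP vP ` jordan_idx lam \<union> jordan_vec NB (map (inv g) vR) ` K"
  have "K \<subseteq> jordan_idx nu"
    by (auto simp: K_def)
  note lifted = independent_lifted_chains[OF vs ses inj_vP indep_vP len_vR inj_vR indep_vR this]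
  have indep: "\<not> module.dependent sB C" and card_C: "card C = card (jordan_idx lam) + card K"
    unfolding C_def by (fact lifted)+
  define W where "W = f ` jordan_vec NP vP ` {(i, m) \<in> jordan_idx lam. a \<le> i}"
  define H where "H = (!) (map (inv g) vR) ` {..<n} \<union> (\<lambda>i. f (vP ! i)) ` {..<a}"
  have "jordan_vec NB (map (inv g) vR) ` K \<subseteq> iterates NB H"
    unfolding K_def by (rule jordan_chains_prefix_subset_iterates) (simp add: H_def)
  moreover have "f ` jordan_vec NP vP ` jordan_idx lam \<subseteq> W \<union> iterates NB H"
    unfolding W_def by (rule kN_hom_image_jordan_chains_subset[OF homf]) (simp add: H_def)
  ultimately have C_cyclic: "C \<subseteq> W \<union> iterates NB H"
    unfolding C_def by (simp add: le_supI2)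
  have card_H: "card H \<le> n + a"
    unfolding H_def by (rule order_trans[OF card_Un_le add_mono])
      (metis card_image_le card_lessThan finite_lessThan)+
  have "finite W" "finite H"
    by (simp_all add: W_def H_def)
  then have "card (jordan_idx lam) + card K \<le> card W + (\<Sum>j<n + a. part mu j)"
    using card_independent_in_iterates_le[OF vs(2) lin_NB assms(6) _ _ card_H indep C_cyclic] card_C
    by simp
  moreover have "card W \<le> card {(i, m) \<in> jordan_idx lam. a \<le> i}"
    unfolding W_def image_comp by (rule card_image_le) simp
  ultimately show ?thesis
    using card_jordan_idx_split[of lam a] card_jordan_idx_prefix[of nu n] by (simp add: K_def)
qed

section \<open>Dominance\<close>

fun merge_desc :: "nat list \<Rightarrow> nat list \<Rightarrow> nat list" where
  "merge_desc [] ys = ys"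
| "merge_desc xs [] = xs"
| "merge_desc (x # xs) (y # ys) =
     (if y \<le> x then x # merge_desc xs (y # ys) else y # merge_desc (x # xs) ys)"

lemma mset_merge_desc: "mset (merge_desc xs ys) = mset xs + mset ys"
  by (induction xs ys rule: merge_desc.induct) auto

lemma sorted_merge_desc:
  "sorted_wrt (\<ge>) xs \<Longrightarrow> sorted_wrt (\<ge>) ys \<Longrightarrow> sorted_wrt (\<ge>) (merge_desc xs ys)"
  by (induction xs ys rule: merge_desc.induct) (auto simp flip: set_mset_mset simp: mset_merge_desc)

lemma part_union_eq_merge_desc:
  assumes "sorted_wrt (\<ge>) xs" "sorted_wrt (\<ge>) ys"
  shows "part_union xs ys = merge_desc xs ys"
proof -
  have "sort (xs @ ys) = rev (merge_desc xs ys)"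
    using sorted_merge_desc[OF assms]
    by (intro properties_for_sort) (simp_all add: mset_merge_desc sorted_wrt_rev)
  then show ?thesis by (simp add: part_union_def)
qed

lemma sum_part_Cons: "(\<Sum>i<Suc n. part (x # xs) i) = x + (\<Sum>i<n. part xs i)"
  by (subst sum.lessThan_Suc_shift) simp

lemma sum_part_merge_desc:
  "\<exists>a b. a + b = n \<and>
     (\<Sum>i<n. part (merge_desc xs ys) i) = (\<Sum>i<a. part xs i) + (\<Sum>i<b. part ys i)"
proof (induction xs ys arbitrary: n rule: merge_desc.induct)
  case (1 ys)
  show ?case by (rule exI[of _ 0]) simp
next
  case (2 x xs)
  show ?case by (rule exI[of _ n], rule exI[of _ 0]) simp
next
  case (3 x xs y ys)
  show ?case
  proof (cases n)
    case 0
    then show ?thesis by simp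
  next
    case (Suc n')
    show ?thesis
    proof (cases "y \<le> x")
      case True
      with "3.IH"(1)[of n'] obtain a b where "a + b = n'"
        "(\<Sum>i<n'. part (merge_desc xs (y # ys)) i) = (\<Sum>i<a. part xs i) + (\<Sum>i<b. part (y # ys) i)"
        by blast
      then show ?thesis
        using True Suc by (intro exI[of _ "Suc a"] exI[of _ b])
          (simp add: sum_part_Cons del: sum.lessThan_Suc)
    next
      case False
      with "3.IH"(2)[of n'] obtain a b where "a + b = n'"
        "(\<Sum>i<n'. part (merge_desc (x # xs) ys) i) = (\<Sum>i<a. part (x # xs) i) + (\<Sum>i<b. part ys i)"
        by blast
      then show ?thesis
        using False Suc by (intro exI[of _ a] exI[of _ "Suc b"])
          (simp add: sum_part_Cons del: sum.lessThan_Suc)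
    qed
  qed
qed

lemma dominated_part_union:
  assumes "sorted_wrt (\<ge>) lam" "sorted_wrt (\<ge>) nu"
    and prefix: "\<And>n a. (\<Sum>j<n. part nu j) + (\<Sum>i<a. part lam i) \<le> (\<Sum>j<n + a. part mu j)"
  shows "dominated (part (part_union lam nu)) (part mu)"
  unfolding dominated_def part_union_eq_merge_desc[OF assms(1,2)]
proof
  fix n
  obtain a b where "a + b = n"
    and "(\<Sum>i<n. part (merge_desc lam nu) i) = (\<Sum>i<a. part lam i) + (\<Sum>i<b. part nu i)"
    using sum_part_merge_desc by blast
  then show "(\<Sum>i<n. part (merge_desc lam nu) i) \<le> (\<Sum>i<n. part mu i)"
    using prefix[of b a] by (simp add: add.commute)
qed

lemma dominated_antisym: "dominated g h \<Longrightarrow> dominated h g \<Longrightarrow> g = h"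
proof
  fix j
  assume "dominated g h" "dominated h g"
  then have "(\<Sum>i<n. g i) = (\<Sum>i<n. h i)" for n
    unfolding dominated_def by (meson le_antisym)
  from this[of "Suc j"] this[of j] show "g j = h j" by simp
qed

lemma sum_part_le_sum_diff_nonneg:
  assumes prefix: "\<And>n a. (\<Sum>j<n. part nu j) + (\<Sum>i<a. part lam i) \<le> (\<Sum>j<n + a. part mu j)"
    and "t \<ge> 0"
  shows "(\<Sum>j<n. part nu j) \<le> (\<Sum>j<n. diff t mu lam j)"
proof -
  define s where "s = nat t"
  have diff: "diff t mu lam j = (if j < s then part mu j
      else part mu (s + 2 * (j - s)) + part mu (s + 2 * (j - s) + 1) - part lam (j - s))" for j
    using \<open>t \<ge> 0\<close> by (simp add: diff_def s_def Let_def)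
  have head: "(\<Sum>j<m. diff t mu lam j) = (\<Sum>j<m. part mu j)" if "m \<le> s" for m
    using that by (intro sum.cong) (auto simp: diff)
  show ?thesis
  proof (cases "n \<le> s")
    case True
    then show ?thesis using prefix[of n 0] head by simp
  next
    case False
    have pairs: "(\<Sum>j<s + 2 * a. part mu j) \<le> (\<Sum>j<s + a. diff t mu lam j) + (\<Sum>i<a. part lam i)" for a
    proof (induction a)
      case 0
      then show ?case using head by simp
    next
      case (Suc a)
      have "part mu (s + 2 * a) + part mu (s + 2 * a + 1) \<le> diff t mu lam (s + a) + part lam a"
        by (simp add: diff)
      then show ?case using Suc.IH by (simp add: add.commute)
    qed
    define a where "a = n - s"
    have "n + a = s + 2 * a"
      using False by (simp add: a_def)
    then have "(\<Sum>j<n. part nu j) + (\<Sum>i<a. part lam i) \<le> (\<Sum>j<s + 2 * a. part mu j)"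
      using prefix[of n a] by (simp only:)
    moreover have "s + a = n"
      using False by (simp add: a_def)
    ultimately show ?thesis using pairs[of a] by simp
  qed
qed

lemma sum_part_le_sum_diff_neg:
  assumes prefix: "\<And>n a. (\<Sum>j<n. part nu j) + (\<Sum>i<a. part lam i) \<le> (\<Sum>j<n + a. part mu j)"
    and "t < 0" and "interlaced t lam mu"
  shows "(\<Sum>j<n. part nu j) \<le> (\<Sum>j<n. diff t mu lam j)"
proof -
  define s where "s = nat (- t)"
  have diff: "diff t mu lam j = part mu (s + 2 * j) + part mu (s + 2 * j + 1) - part lam (s + j)" for j
    using \<open>t < 0\<close> by (simp add: diff_def s_def Let_def)
  have "\<forall>i<s. part lam i = part mu i"
    using \<open>t < 0\<close> \<open>interlaced t lam mu\<close> by (simp add: interlaced_def s_def Let_def)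
  then have head: "(\<Sum>i<s. part lam i) = (\<Sum>i<s. part mu i)"
    by simp
  have pairs: "(\<Sum>j<s + 2 * m. part mu j) \<le> (\<Sum>j<m. diff t mu lam j) + (\<Sum>i<s + m. part lam i)" for m
  proof (induction m)
    case 0
    then show ?case using head by simp
  next
    case (Suc m)
    have "part mu (s + 2 * m) + part mu (s + 2 * m + 1) \<le> diff t mu lam m + part lam (s + m)"
      by (simp add: diff)
    then show ?case using Suc.IH by (simp add: add.commute)
  qed
  have "n + (s + n) = s + 2 * n"
    by simp
  then have "(\<Sum>j<n. part nu j) + (\<Sum>i<s + n. part lam i) \<le> (\<Sum>j<s + 2 * n. part mu j)"
    using prefix[of n "s + n"] by (simp only:)
  then show ?thesis using pairs[of n] by simp
qed

lemma dominated_diff: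
  assumes "\<And>n a. (\<Sum>j<n. part nu j) + (\<Sum>i<a. part lam i) \<le> (\<Sum>j<n + a. part mu j)"
    and "interlaced t lam mu"
  shows "dominated (part nu) (diff t mu lam)"
  unfolding dominated_def
  using sum_part_le_sum_diff_nonneg[OF assms(1)] sum_part_le_sum_diff_neg[OF assms(1) _ assms(2)]
  by (meson not_le)

theorem lemma3p6:
  fixes sP :: "'k::field \<Rightarrow> 'p::ab_group_add \<Rightarrow> 'p" and NP :: "'p \<Rightarrow> 'p"
    and sB :: "'k \<Rightarrow> 'b::ab_group_add \<Rightarrow> 'b" and NB :: "'b \<Rightarrow> 'b"
    and sR :: "'k \<Rightarrow> 'r::ab_group_add \<Rightarrow> 'r" and NR :: "'r \<Rightarrow> 'r"
    and f :: "'p \<Rightarrow> 'b" and g :: "'b \<Rightarrow> 'r"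
    and lam mu nu :: "nat list"
  assumes "fl_module sP NP" and "fl_module sB NB" and "fl_module sR NR"
    and "short_exact sP NP sB NB sR NR f g"
    and "jordan_type sP NP lam" and "jordan_type sB NB mu" and "jordan_type sR NR nu"
  shows "dominated (part (part_union lam nu)) (part mu) \<and>
    (\<forall>t::int. interlaced t lam mu \<longrightarrow> \<not> strictly_dominated (diff t mu lam) (part nu))"
proof
  have prefix: "(\<Sum>j<n. part nu j) + (\<Sum>i<a. part lam i) \<le> (\<Sum>j<n + a. part mu j)" for n a
    using short_exact_prefix_sum_le[OF assms] .
  have "sorted_wrt (\<ge>) lam" "sorted_wrt (\<ge>) nu"
    using assms(5,7) by (simp_all add: jordan_type_def is_partition_def)
  then show "dominated (part (part_union lam nu)) (part mu)"
    using prefix by (rule dominated_part_union)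
  show "\<forall>t::int. interlaced t lam mu \<longrightarrow> \<not> strictly_dominated (diff t mu lam) (part nu)"
    using dominated_diff[OF prefix] dominated_antisym by (auto simp: strictly_dominated_def)
qed

end
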